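(* Let $C$ be a complete structured DNNF and $g$ a $\cup$-gate of $C$. The following procedure $\mathrm{Enum}(g)$ enumerates $S(g)$ (possibly with duplicates) with delay $O(\mathrm{depth}(C)\times|S|)$, where $S$ is the produced assignment: traverse, by a naive preorder traversal following wires backwards from $g$ through $\cup$-gates only, the gates $g'\in\downarrow g$ (each $g'$ possibly reached once per path); for each such $g'$, if $g'$ is a var-gate output $S_{\mathrm{var}}(g')$, and if $g'$ is a $\times$-gate with left input $g_L$ and right input $g_R$, then for each $S_L$ output by $\mathrm{Enum}(g_L)$ and each $S_R$ output by $\mathrm{Enum}(g_R)$ (nested, with recursive enumerations run lazily, resuming only when the next value is requested) output $S_L\cup S_R$.
   Context: A set circuit $C=(G,W,\mu)$ is a finite DAG with gates $G$, wires $W\subseteq G\times G$, gate types $\mu(g)\in\{\top,\bot,\mathrm{var},\times,\cup\}$, and an injective map $S_{\mathrm{var}}$ giving each var-gate a set of variables; $C_{\mathrm{var}}$ is the union of all $S_{\mathrm{var}}(g)$. Inputs of $g$ are the $g'$ with $(g',g)\in W$; $\top,\bot,\mathrm{var}$-gates have no inputs, $\times$-gates exactly two, $\cup$-gates at least one, and $\top,\bot$-gates are never inputs. Captured sets: $S(g)=\{S_{\mathrm{var}}(g)\}$ for var-gates, $\emptyset$ for $\bot$, $\{\emptyset\}$ for $\top$, $\{S_1\cup S_2\mid S_1\in S(g_1),S_2\in S(g_2)\}$ for a $\times$-gate with inputs $g_1,g_2$, the union over inputs for $\cup$-gates. Depth is the maximal length of a directed path. For a $\cup$-gate $g$, write $g'\overset{\cup}{\leadsto}g$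 if there is a directed path of wires from $g'$ to $g$ all of whose gates other than $g'$ are $\cup$-gates, and $\downarrow g$ is the set of var- and $\times$-gates $g'$ with $g'\overset{\cup}{\leadsto}g$. A v-tree for $C$ is a binary tree whose leaves are labeled by sets of variables partitioning $C_{\mathrm{var}}$; a structuring function $\sigma$ maps gates to v-tree nodes so that each var-gate $g$ goes to a leaf whose label contains $S_{\mathrm{var}}(g)$, for each wire $(g',g)$ either $\sigma(g')=\sigma(g)$ or $g'$ is a $\cup$-gate with $\sigma(g')$ a child of $\sigma(g)$, and each $\times$-gate $g$ has a left input mapped to the left child and a right input mapped to the right child of $\sigma(g)$. A complete structured DNNF is a set circuit with a v-tree and structuring function. Delay is the maximal time before the first output, between consecutive outputs, and after the last. *)

theory Defs
  imports Main
begin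

datatype gtype = GTop | GBot | GVar | GTimes | GUnion

definition inputs :: "('g \<times> 'g) set \<Rightarrow> 'g \<Rightarrow> 'g set" where
  "inputs W g = {g'. (g', g) \<in> W}"

definition set_circuit ::
  "'g set \<Rightarrow> ('g \<times> 'g) set \<Rightarrow> ('g \<Rightarrow> gtype) \<Rightarrow> ('g \<Rightarrow> 'v set) \<Rightarrow> bool" where
  "set_circuit G W mu Svar \<longleftrightarrow>
     finite G \<and> W \<subseteq> G \<times> G \<and> acyclic W \<and>
     inj_on Svar {g \<in> G. mu g = GVar} \<and>
     (\<forall>g \<in> G. mu g = GVar \<longrightarrow> finite (Svar g)) \<and>
     (\<forall>g \<in> G. mu g \<in> {GTop, GBot, GVar} \<longrightarrow> inputs W g = {}) \<and>
     (\<forall>g \<in> G. mu g = GTimes \<longrightarrow> card (inputs W g) = 2) \<and>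
     (\<forall>g \<in> G. mu g = GUnion \<longrightarrow> inputs W g \<noteq> {}) \<and>
     (\<forall>(g', g) \<in> W. mu g' \<notin> {GTop, GBot})"

definition circuit_vars :: "'g set \<Rightarrow> ('g \<Rightarrow> gtype) \<Rightarrow> ('g \<Rightarrow> 'v set) \<Rightarrow> 'v set" where
  "circuit_vars G mu Svar = (\<Union>g \<in> {g \<in> G. mu g = GVar}. Svar g)"

text \<open>Captured sets S(g) (least fixpoint, which is the recursive definition on a DAG).\<close>
inductive captures ::
  "'g set \<Rightarrow> ('g \<times> 'g) set \<Rightarrow> ('g \<Rightarrow> gtype) \<Rightarrow> ('g \<Rightarrow> 'v set) \<Rightarrow> 'g \<Rightarrow> 'v set \<Rightarrow> bool"
  for G W mu Svar where
  cap_var: "g \<in> G \<Longrightarrow> mu g = GVar \<Longrightarrow> captures G W mu Svar g (Svar g)"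
| cap_top: "g \<in> G \<Longrightarrow> mu g = GTop \<Longrightarrow> captures G W mu Svar g {}"
| cap_times: "g \<in> G \<Longrightarrow> mu g = GTimes \<Longrightarrow> inputs W g = {g1, g2} \<Longrightarrow> g1 \<noteq> g2 \<Longrightarrow>
     captures G W mu Svar g1 S1 \<Longrightarrow> captures G W mu Svar g2 S2 \<Longrightarrow>
     captures G W mu Svar g (S1 \<union> S2)"
| cap_union: "g \<in> G \<Longrightarrow> mu g = GUnion \<Longrightarrow> g' \<in> inputs W g \<Longrightarrow>
     captures G W mu Svar g' S \<Longrightarrow> captures G W mu Svar g S"

definition captured_sets ::
  "'g set \<Rightarrow> ('g \<times> 'g) set \<Rightarrow> ('g \<Rightarrow> gtype) \<Rightarrow> ('g \<Rightarrow> 'v set) \<Rightarrow> 'g \<Rightarrow> 'v set set" where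
  "captured_sets G W mu Svar g = {S. captures G W mu Svar g S}"

definition depth :: "('g \<times> 'g) set \<Rightarrow> nat" where
  "depth W = Max {n. \<exists>a b. (a, b) \<in> W ^^ n}"

datatype 'v vtree = Leaf "'v set" | Node "'v vtree" "'v vtree"

fun subtree_at :: "'v vtree \<Rightarrow> bool list \<Rightarrow> 'v vtree option" where
  "subtree_at T [] = Some T"
| "subtree_at (Node l r) (False # p) = subtree_at l p"
| "subtree_at (Node l r) (True # p) = subtree_at r p"
| "subtree_at (Leaf L) (b # p) = None"

fun leaf_labels :: "'v vtree \<Rightarrow> 'v set list" where
  "leaf_labels (Leaf L) = [L]"
| "leaf_labels (Node l r) = leaf_labels l @ leaf_labels r"

definition is_vtree_for :: "'v vtree \<Rightarrow> 'v set \<Rightarrow> bool" where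
  "is_vtree_for T X \<longleftrightarrow>
     (\<forall>i < length (leaf_labels T). \<forall>j < length (leaf_labels T).
        i \<noteq> j \<longrightarrow> leaf_labels T ! i \<inter> leaf_labels T ! j = {}) \<and>
     \<Union> (set (leaf_labels T)) = X"

definition structuring ::
  "'g set \<Rightarrow> ('g \<times> 'g) set \<Rightarrow> ('g \<Rightarrow> gtype) \<Rightarrow> ('g \<Rightarrow> 'v set) \<Rightarrow> 'v vtree \<Rightarrow> ('g \<Rightarrow> bool list) \<Rightarrow> bool" where
  "structuring G W mu Svar T \<sigma> \<longleftrightarrow>
     (\<forall>g \<in> G. subtree_at T (\<sigma> g) \<noteq> None) \<and>
     (\<forall>g \<in> G. mu g = GVar \<longrightarrow> (\<exists>L. subtree_at T (\<sigma> g) = Some (Leaf L) \<and> Svar g \<subseteq> L)) \<and>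
     (\<forall>(g', g) \<in> W. \<sigma> g' = \<sigma> g \<or>
        (mu g' = GUnion \<and> (\<sigma> g' = \<sigma> g @ [False] \<or> \<sigma> g' = \<sigma> g @ [True]))) \<and>
     (\<forall>g \<in> G. mu g = GTimes \<longrightarrow>
        (\<exists>gL \<in> inputs W g. \<sigma> gL = \<sigma> g @ [False]) \<and>
        (\<exists>gR \<in> inputs W g. \<sigma> gR = \<sigma> g @ [True]))"

definition complete_structured_DNNF ::
  "'g set \<Rightarrow> ('g \<times> 'g) set \<Rightarrow> ('g \<Rightarrow> gtype) \<Rightarrow> ('g \<Rightarrow> 'v set) \<Rightarrow> 'v vtree \<Rightarrow> ('g \<Rightarrow> bool list) \<Rightarrow> bool" where
  "complete_structured_DNNF G W mu Svar T \<sigma> \<longleftrightarrow>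
     set_circuit G W mu Svar \<and> is_vtree_for T (circuit_vars G mu Svar) \<and>
     structuring G W mu Svar T \<sigma>"

text \<open>An execution trace: Tick = one unit of work, Out S = output of the set S.\<close>
datatype 'v ev = Tick | Out "'v set"

text \<open>Nested lazy enumeration at a times-gate: run the left enumeration; for each
  output S_L, run a fresh copy of the right enumeration, replacing each of its outputs
  S_R by the computation of S_L \<union> S_R (cost |S_L|+|S_R|) and its output.\<close>
fun prod_trace :: "'v ev list \<Rightarrow> 'v ev list \<Rightarrow> 'v ev list" where
  "prod_trace [] R = []"
| "prod_trace (Tick # L) R = Tick # prod_trace L R"
| "prod_trace (Out S # L) R =
     concat (map (\<lambda>e. case e of Tick \<Rightarrow> [Tick]
                    | Out T \<Rightarrow> replicate (card S + card T) Tick @ [Out (S \<union> T)]) R)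
     @ prod_trace L R"

text \<open>enum_trace ... g tr: tr is the trace of running the naive traversal from g.
  ins g lists the inputs of a union gate in the order the traversal visits them.
  Each visited gate costs one unit; outputting S_var(g) costs |S_var(g)| units.\<close>
inductive enum_trace ::
  "'g set \<Rightarrow> ('g \<times> 'g) set \<Rightarrow> ('g \<Rightarrow> gtype) \<Rightarrow> ('g \<Rightarrow> 'v set) \<Rightarrow> ('g \<Rightarrow> bool list)
   \<Rightarrow> ('g \<Rightarrow> 'g list) \<Rightarrow> 'g \<Rightarrow> 'v ev list \<Rightarrow> bool"
  for G W mu Svar \<sigma> ins where
  tr_var: "g \<in> G \<Longrightarrow> mu g = GVar \<Longrightarrow>
     enum_trace G W mu Svar \<sigma> ins g (Tick # replicate (card (Svar g)) Tick @ [Out (Svar g)])"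
| tr_times: "g \<in> G \<Longrightarrow> mu g = GTimes \<Longrightarrow>
     gL \<in> inputs W g \<Longrightarrow> \<sigma> gL = \<sigma> g @ [False] \<Longrightarrow>
     gR \<in> inputs W g \<Longrightarrow> \<sigma> gR = \<sigma> g @ [True] \<Longrightarrow>
     enum_trace G W mu Svar \<sigma> ins gL tL \<Longrightarrow> enum_trace G W mu Svar \<sigma> ins gR tR \<Longrightarrow>
     enum_trace G W mu Svar \<sigma> ins g (Tick # prod_trace tL tR)"
| tr_union: "g \<in> G \<Longrightarrow> mu g = GUnion \<Longrightarrow> length ts = length (ins g) \<Longrightarrow>
     (\<forall>i < length ts. enum_trace G W mu Svar \<sigma> ins (ins g ! i) (ts ! i)) \<Longrightarrow>
     enum_trace G W mu Svar \<sigma> ins g (Tick # concat ts)"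

fun outputs :: "'v ev list \<Rightarrow> 'v set list" where
  "outputs [] = []"
| "outputs (Tick # r) = outputs r"
| "outputs (Out S # r) = S # outputs r"

text \<open>gaps tr ! i = number of work units between output i-1 and output i
  (gap 0 = before the first output, last gap = after the last output).\<close>
fun gaps :: "'v ev list \<Rightarrow> nat list" where
  "gaps [] = [0]"
| "gaps (Tick # r) = (let gs = gaps r in Suc (hd gs) # tl gs)"
| "gaps (Out S # r) = 0 # gaps r"

definition adjacent_size :: "'v set list \<Rightarrow> nat \<Rightarrow> nat" where
  "adjacent_size os i =
     (if 0 < i then card (os ! (i - 1)) else 0) + (if i < length os then card (os ! i) else 0)"

end

theory Submission
  imports Defs
begin

text \<open>
  A trace that ends with an output is a list of blocks (k, X): k units of work followed by the
  output X, so its gaps are the k's. By induction on the trace one shows that every block (k, X)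
  produced at a gate g, all of whose incoming paths have length at most h, satisfies
  k \<le> (2h + 2)(|X| + e), where e \<le> 1 counts the var-gates with empty label below the v-tree
  node of g (there is at most one, as Svar is injective). The term e pays for the traversal
  when the output is empty. A union-gate adds one unit before its first output; a times-gate
  adds the waiting times of both sides and |S| + |T| for computing S \<union> T, and since the two
  sides are structured by disjoint subtrees of the v-tree, |S \<union> T| = |S| + |T| and e is
  superadditive, so the invariant passes from height h - 1 to height h. The set of outputs
  follows the recursive description of the captured sets by the same induction.
\<close>

section \<open>Traces as lists of blocks\<close>

lemma UN_set_conv_nth: "(\<Union>x \<in> set xs. f x) = (\<Union>i < length xs. f (xs ! i))"
  by (auto simp: in_set_conv_nth) (metis nth_mem)

lemma outputs_append: "outputs (xs @ ys) = outputs xs @ outputs ys"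
  by (induction xs rule: outputs.induct) auto

lemma outputs_concat: "outputs (concat xss) = concat (map outputs xss)"
  by (induction xss) (auto simp: outputs_append)

lemma outputs_replicate_Tick [simp]: "outputs (replicate k Tick) = []"
  by (induction k) auto

lemma outputs_prod_trace:
  "outputs (prod_trace L R) = concat (map (\<lambda>S. map ((\<union>) S) (outputs R)) (outputs L))"
proof (induction L R rule: prod_trace.induct)
  case (3 S L R)
  have "outputs (concat (map (\<lambda>e. case e of Tick \<Rightarrow> [Tick]
          | Out T \<Rightarrow> replicate (card S + card T) Tick @ [Out (S \<union> T)]) R'))
        = map ((\<union>) S) (outputs R')" for R' :: "'a ev list"
    by (induction R' rule: outputs.induct) (auto simp: outputs_append)
  with 3 show ?case by (simp add: outputs_append)
qed simp_all

definition blocks :: "(nat \<times> 'v set) list \<Rightarrow> 'v ev list" where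
  "blocks bs = concat (map (\<lambda>(k, X). replicate k Tick @ [Out X]) bs)"

lemma blocks_Nil [simp]: "blocks [] = []"
  and blocks_Cons [simp]: "blocks ((k, X) # bs) = replicate k Tick @ Out X # blocks bs"
  and blocks_append [simp]: "blocks (bs @ cs) = blocks bs @ blocks cs"
  by (simp_all add: blocks_def)

lemma blocks_concat: "concat (map blocks bss) = blocks (concat bss)"
  by (induction bss) auto

lemma outputs_blocks: "outputs (blocks bs) = map snd bs"
  by (induction bs) (auto simp: outputs_append)

lemma gaps_replicate_Tick: "gaps (replicate k Tick @ xs) = (hd (gaps xs) + k) # tl (gaps xs)"
proof -
  have "gaps xs \<noteq> []" by (induction xs rule: gaps.induct) (auto simp: Let_def)
  then show ?thesis by (induction k) (auto simp: Let_def)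
qed

lemma gaps_blocks: "gaps (blocks bs) = map fst bs @ [0]"
  by (induction bs) (auto simp: gaps_replicate_Tick)

fun add_first_gap :: "nat \<Rightarrow> (nat \<times> 'v set) list \<Rightarrow> (nat \<times> 'v set) list" where
  "add_first_gap k [] = []"
| "add_first_gap k ((j, X) # bs) = (j + k, X) # bs"

lemma add_first_gap_Nil_iff [simp]: "add_first_gap k bs = [] \<longleftrightarrow> bs = []"
  by (cases "(k, bs)" rule: add_first_gap.cases) auto

lemma replicate_Tick_blocks:
  "bs \<noteq> [] \<Longrightarrow> replicate k Tick @ blocks bs = blocks (add_first_gap k bs)"
  by (cases "(k, bs)" rule: add_first_gap.cases) (simp_all add: replicate_add[symmetric] add.commute)

lemma Tick_blocks: "bs \<noteq> [] \<Longrightarrow> Tick # blocks bs = blocks (add_first_gap 1 bs)"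
  using replicate_Tick_blocks[of bs 1] by simp

lemma add_first_gap_memE:
  assumes "b \<in> set (add_first_gap k bs)"
  obtains b' where "b' \<in> set bs" "snd b = snd b'" "fst b \<le> fst b' + k"
proof (cases bs)
  case (Cons c cs)
  obtain j X where "c = (j, X)" by fastforce
  with Cons assms show ?thesis using that[of c] that[of b] by auto
qed (use assms in simp)

definition join_block :: "'v set \<Rightarrow> nat \<times> 'v set \<Rightarrow> nat \<times> 'v set" where
  "join_block S = (\<lambda>(j, T). (j + card S + card T, S \<union> T))"

fun prod_blocks ::
  "(nat \<times> 'v set) list \<Rightarrow> (nat \<times> 'v set) list \<Rightarrow> (nat \<times> 'v set) list" where
  "prod_blocks [] R = []"
| "prod_blocks ((k, S) # L) R =
     add_first_gap k (map (join_block S) R) @ prod_blocks L R"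

lemma prod_blocks_Nil_iff: "prod_blocks L R = [] \<longleftrightarrow> L = [] \<or> R = []"
  by (induction L R rule: prod_blocks.induct) auto

lemma prod_trace_replicate_Tick:
  "prod_trace (replicate k Tick @ L) R = replicate k Tick @ prod_trace L R"
  by (induction k) auto

lemma prod_trace_Out_blocks:
  "prod_trace (Out S # L) (blocks R) =
     blocks (map (join_block S) R) @ prod_trace L (blocks R)"
proof (induction R)
  case (Cons b R)
  obtain j T where "b = (j, T)" by fastforce
  with Cons show ?case by (simp add: join_block_def map_replicate_const replicate_add)
qed simp

lemma prod_trace_blocks:
  assumes "R \<noteq> []"
  shows "prod_trace (blocks L) (blocks R) = blocks (prod_blocks L R)"
proof (induction L)
  case (Cons b L)
  obtain k S where b: "b = (k, S)" by fastforce
  have "prod_trace (blocks (b # L)) (blocks R) =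
      replicate k Tick @ prod_trace (Out S # blocks L) (blocks R)"
    by (simp only: b blocks_Cons prod_trace_replicate_Tick)
  also have "\<dots> = replicate k Tick @
      blocks (map (join_block S) R) @ blocks (prod_blocks L R)"
    by (simp only: prod_trace_Out_blocks Cons.IH)
  also have "\<dots> = blocks (prod_blocks (b # L) R)"
    using assms by (simp add: b replicate_Tick_blocks[symmetric])
  finally show ?case .
qed simp

lemma prod_blocks_memE:
  assumes "b \<in> set (prod_blocks L R)"
  obtains kS S kT T where "(kS, S) \<in> set L" "(kT, T) \<in> set R" "snd b = S \<union> T"
    "fst b \<le> kS + kT + card S + card T"
  using assms
proof (induction L R rule: prod_blocks.induct)
  case (2 k S L R)
  from "2.prems"(2) consider "b \<in> set (prod_blocks L R)"
    | "b \<in> set (add_first_gap k (map (join_block S) R))"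
    by auto
  then show ?case
  proof cases
    case 1
    then show ?thesis using "2.IH" "2.prems"(1) by (meson list.set_intros(2))
  next
    case 2
    then obtain b' where "b' \<in> set (map (join_block S) R)"
      "snd b = snd b'" "fst b \<le> fst b' + k"
      by (rule add_first_gap_memE)
    then show ?thesis using "2.prems"(1) by (fastforce simp: join_block_def)
  qed
qed simp

section \<open>Disjoint subtrees of a v-tree\<close>

lemma subtree_at_append:
  "subtree_at t (p @ q) = (case subtree_at t p of None \<Rightarrow> None | Some t' \<Rightarrow> subtree_at t' q)"
  by (induction t p rule: subtree_at.induct) auto

lemma leaf_labels_subtree_at:
  "subtree_at t p = Some t' \<Longrightarrow> \<exists>A B. leaf_labels t = A @ leaf_labels t' @ B"
proof (induction t p rule: subtree_at.induct)
  case (1 t)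
  then have "leaf_labels t = [] @ leaf_labels t' @ []" by simp
  then show ?case by blast
next
  case (2 l r p)
  then obtain A B where "leaf_labels l = A @ leaf_labels t' @ B" by auto
  then show ?case by (metis append.assoc leaf_labels.simps(2))
next
  case (3 l r p)
  then obtain A B where "leaf_labels r = A @ leaf_labels t' @ B" by auto
  then show ?case by (metis append.assoc leaf_labels.simps(2))
qed auto

lemma Union_set_disjoint_if_nth_disjoint:
  assumes disj: "\<forall>i < length zs. \<forall>j < length zs. i \<noteq> j \<longrightarrow> zs ! i \<inter> zs ! j = {}"
    and zs: "zs = A @ xs @ ys @ B"
  shows "\<Union> (set xs) \<inter> \<Union> (set ys) = {}"
proof (rule ccontr)
  assume "\<Union> (set xs) \<inter> \<Union> (set ys) \<noteq> {}"
  then obtain x i j where i: "i < length xs" "x \<in> xs ! i" and j: "j < length ys" "x \<in> ys ! j"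
    by (auto simp: in_set_conv_nth)
  have "zs ! (length A + i) = xs ! i" "zs ! (length A + length xs + j) = ys ! j"
    using i j zs by (simp_all add: nth_append)
  moreover have "length A + i \<noteq> length A + length xs + j"
    "length A + i < length zs" "length A + length xs + j < length zs"
    using i j zs by auto
  then have "zs ! (length A + i) \<inter> zs ! (length A + length xs + j) = {}"
    using disj by blast
  ultimately have "xs ! i \<inter> ys ! j = {}" by simp
  then show False using i j by blast
qed

definition vtree_vars :: "'v vtree \<Rightarrow> bool list \<Rightarrow> 'v set" where
  "vtree_vars T p = (case subtree_at T p of None \<Rightarrow> {} | Some t \<Rightarrow> \<Union> (set (leaf_labels t)))"

lemma vtree_vars_child: "vtree_vars T (p @ [b]) \<subseteq> vtree_vars T p"
  by (cases "subtree_at T p" rule: option.exhaust; cases "the (subtree_at T p)"; cases b)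
    (auto simp: vtree_vars_def subtree_at_append)

lemma vtree_vars_children_disjoint:
  assumes "is_vtree_for T X"
  shows "vtree_vars T (p @ [False]) \<inter> vtree_vars T (p @ [True]) = {}"
proof (cases "subtree_at T p")
  case (Some t)
  show ?thesis
  proof (cases t)
    case (Node l r)
    obtain A B where "leaf_labels T = A @ leaf_labels l @ leaf_labels r @ B"
      using leaf_labels_subtree_at[OF Some] Node by auto
    then have "\<Union> (set (leaf_labels l)) \<inter> \<Union> (set (leaf_labels r)) = {}"
      using assms unfolding is_vtree_for_def by (intro Union_set_disjoint_if_nth_disjoint) auto
    then show ?thesis using Some Node by (simp add: vtree_vars_def subtree_at_append)
  qed (use Some in \<open>simp add: vtree_vars_def subtree_at_append\<close>)
qed (simp add: vtree_vars_def subtree_at_append)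

section \<open>Path lengths in a finite acyclic relation\<close>

definition height_le :: "('a \<times> 'a) set \<Rightarrow> 'a \<Rightarrow> nat \<Rightarrow> bool" where
  "height_le W g h \<longleftrightarrow> (\<forall>a n. (a, g) \<in> W ^^ n \<longrightarrow> n \<le> h)"

lemma height_le_wire:
  assumes "height_le W g h" and "(g', g) \<in> W"
  shows "0 < h" and "height_le W g' (h - 1)"
proof -
  have "(g', g) \<in> W ^^ 1" using assms(2) by simp
  then show "0 < h" using assms(1) unfolding height_le_def by fastforce
  have "Suc n \<le> h" if "(a, g') \<in> W ^^ n" for a n
    using assms relpow_Suc_I[OF that assms(2)] unfolding height_le_def by blast
  then show "height_le W g' (h - 1)" unfolding height_le_def by fastforce
qed

lemma relpow_acyclic_less_card:
  assumes "finite A" "W \<subseteq> A \<times> A" "acyclic W" "(a, b) \<in> W ^^ n" "0 < n"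
  shows "n < card A"
proof -
  obtain f where f: "f 0 = a" "f n = b" "\<forall>i<n. (f i, f (Suc i)) \<in> W"
    using assms(4) relpow_fun_conv by metis
  have path: "(f i, f j) \<in> W\<^sup>+" if "i < j" "j \<le> n" for i j
  proof -
    have "(f i, f j) \<in> W ^^ (j - i)"
      unfolding relpow_fun_conv using f(3) that by (intro exI[of _ "\<lambda>k. f (i + k)"]) auto
    then show ?thesis using that unfolding trancl_power by (intro exI[of _ "j - i"]) simp
  qed
  have "inj_on f {0..n}"
  proof (rule inj_onI, rule ccontr)
    fix i j assume "i \<in> {0..n}" "j \<in> {0..n}" "f i = f j" "i \<noteq> j"
    then have "(f i, f i) \<in> W\<^sup>+" using path[of i j] path[of j i] by (cases "i < j") auto
    then show False using assms(3) unfolding acyclic_def by blast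
  qed
  moreover have "f ` {0..n} \<subseteq> A"
  proof clarify
    fix i assume "i \<in> {0..n}"
    moreover have "(f (n - 1), f n) \<in> W" using f(3)[rule_format, of "n - 1"] assms(5) by simp
    ultimately have "(f i, f (Suc i)) \<in> W \<or> (f (n - 1), f i) \<in> W"
      using f(3) by (cases "i < n") auto
    then show "f i \<in> A" using assms(2) by blast
  qed
  ultimately have "card {0..n} \<le> card A" using card_inj_on_le assms(1) by blast
  then show ?thesis by simp
qed

lemma finite_relpow_lengths:
  assumes "finite A" "W \<subseteq> A \<times> A" "acyclic W"
  shows "finite {n. \<exists>a b. (a, b) \<in> W ^^ n}"
proof (rule finite_subset)
  show "{n. \<exists>a b. (a, b) \<in> W ^^ n} \<subseteq> {..card A}"
  proof
    fix n assume "n \<in> {n. \<exists>a b. (a, b) \<in> W ^^ n}"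
    then obtain a b where "(a, b) \<in> W ^^ n" by blast
    then show "n \<in> {..card A}" using relpow_acyclic_less_card[OF assms, of a b n] by (cases n) auto
  qed
qed simp

lemma height_le_depth:
  assumes "finite A" "W \<subseteq> A \<times> A" "acyclic W"
  shows "height_le W g (depth W)"
  unfolding height_le_def depth_def using finite_relpow_lengths[OF assms] by (blast intro: Max_ge)

lemma depth_pos:
  assumes "finite A" "W \<subseteq> A \<times> A" "acyclic W" "(a, b) \<in> W"
  shows "0 < depth W"
proof -
  have "1 \<le> depth W"
    unfolding depth_def using finite_relpow_lengths[OF assms(1-3)] assms(4)
    by (intro Max_ge) auto
  then show ?thesis by simp
qed

lemma gap_bound_step:
  fixes h kL kR a b eL eR e :: nat
  assumes "kL \<le> 2 * h * (a + eL)" "kR \<le> 2 * h * (b + eR)" "eL + eR \<le> e" "0 < a + b + e"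
  shows "kL + kR + a + b + 1 \<le> (2 * h + 2) * (a + b + e)"
proof -
  have "2 * h * (a + eL) + 2 * h * (b + eR) = 2 * h * (a + b + (eL + eR))"
    by (simp add: algebra_simps)
  also have "\<dots> \<le> 2 * h * (a + b + e)" using assms(3) by simp
  finally have "kL + kR \<le> 2 * h * (a + b + e)" using assms(1,2) by linarith
  moreover have "a + b + 1 \<le> 2 * (a + b + e)" using assms(4) by arith
  ultimately have "kL + kR + a + b + 1 \<le> 2 * h * (a + b + e) + 2 * (a + b + e)" by linarith
  also have "\<dots> = (2 * h + 2) * (a + b + e)" by (simp add: algebra_simps)
  finally show ?thesis .
qed

section \<open>Enumeration in a complete structured DNNF\<close>

locale DNNF_enumeration =
  fixes G :: "'g set" and W :: "('g \<times> 'g) set" and mu :: "'g \<Rightarrow> gtype"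
    and Svar :: "'g \<Rightarrow> 'v set" and T :: "'v vtree" and \<sigma> :: "'g \<Rightarrow> bool list"
    and ins :: "'g \<Rightarrow> 'g list"
  assumes DNNF: "complete_structured_DNNF G W mu Svar T \<sigma>"
    and ins_inputs: "\<And>h. h \<in> G \<Longrightarrow> mu h = GUnion \<Longrightarrow> set (ins h) = inputs W h"
begin

abbreviation cap :: "'g \<Rightarrow> 'v set \<Rightarrow> bool" where
  "cap \<equiv> captures G W mu Svar"

abbreviation trace :: "'g \<Rightarrow> 'v ev list \<Rightarrow> bool" where
  "trace \<equiv> enum_trace G W mu Svar \<sigma> ins"

lemma circuit: "set_circuit G W mu Svar"
  and structured: "structuring G W mu Svar T \<sigma>"
  and vtree: "is_vtree_for T (circuit_vars G mu Svar)"
  using DNNF by (simp_all add: complete_structured_DNNF_def)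

lemma finite_G: "finite G" and wires_G: "W \<subseteq> G \<times> G" and acyclic_W: "acyclic W"
  using circuit by (simp_all add: set_circuit_def)

lemma in_inputs: "g' \<in> inputs W g \<longleftrightarrow> (g', g) \<in> W"
  by (simp add: inputs_def)

lemma wire_sigma:
  "(c, g) \<in> W \<Longrightarrow> \<sigma> c = \<sigma> g \<or> \<sigma> c = \<sigma> g @ [False] \<or> \<sigma> c = \<sigma> g @ [True]"
  using structured unfolding structuring_def by fast

lemma input_not_constant: "(c, g) \<in> W \<Longrightarrow> mu c \<noteq> GTop \<and> mu c \<noteq> GBot"
  using circuit unfolding set_circuit_def by blast

lemma times_inputs:
  assumes "g \<in> G" "mu g = GTimes" "gL \<in> inputs W g" "gR \<in> inputs W g" "gL \<noteq> gR"
  shows "inputs W g = {gL, gR}"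
proof -
  have "finite (inputs W g)" using finite_G wires_G by (auto simp: inputs_def intro: finite_subset)
  moreover have "card (inputs W g) = 2" using circuit assms(1,2) unfolding set_circuit_def by blast
  ultimately show ?thesis using assms(3-5) by (intro card_subset_eq[symmetric]) auto
qed

lemma captures_var_iff:
  assumes "g \<in> G" "mu g = GVar"
  shows "cap g X \<longleftrightarrow> X = Svar g"
proof
  assume "cap g X"
  then show "X = Svar g" using assms(2) by (cases rule: captures.cases) auto
next
  assume "X = Svar g"
  with assms show "cap g X" by (simp add: cap_var)
qed

lemma captures_times_iff:
  assumes "g \<in> G" "mu g = GTimes" "inputs W g = {gL, gR}" "gL \<noteq> gR"
  shows "cap g X \<longleftrightarrow>
    (\<exists>S T. X = S \<union> T \<and> cap gL S \<and> cap gR T)"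
proof
  assume "cap g X"
  then obtain g1 g2 S1 S2 where "{g1, g2} = {gL, gR}" "X = S1 \<union> S2"
    "cap g1 S1" "cap g2 S2"
    using assms(2,3) by (cases rule: captures.cases) auto
  then show "\<exists>S T. X = S \<union> T \<and> cap gL S \<and> cap gR T"
    by (metis Un_commute doubleton_eq_iff)
next
  assume "\<exists>S T. X = S \<union> T \<and> cap gL S \<and> cap gR T"
  then obtain S T where "X = S \<union> T" "cap gL S" "cap gR T" by blast
  with assms show "cap g X" by (simp add: cap_times)
qed

lemma captures_union_iff:
  assumes "g \<in> G" "mu g = GUnion"
  shows "cap g X \<longleftrightarrow> (\<exists>g' \<in> inputs W g. cap g' X)"
proof
  assume "cap g X"
  then show "\<exists>g' \<in> inputs W g. cap g' X" using assms(2) by (cases rule: captures.cases) auto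
next
  assume "\<exists>g' \<in> inputs W g. cap g' X"
  then obtain g' where "g' \<in> inputs W g" "cap g' X" by blast
  with assms show "cap g X" by (rule cap_union)
qed

lemma vtree_vars_wire:
  assumes "(c, g) \<in> W"
  shows "vtree_vars T (\<sigma> c) \<subseteq> vtree_vars T (\<sigma> g)"
  using wire_sigma[OF assms] vtree_vars_child[of T "\<sigma> g"] by (elim disjE) auto

definition empty_below :: "bool list \<Rightarrow> nat" where
  "empty_below p = card {h \<in> G. mu h = GVar \<and> Svar h = {} \<and> (\<exists>q. \<sigma> h = p @ q)}"

lemma empty_below_le_1: "empty_below p \<le> 1"
proof -
  let ?E = "{h \<in> G. mu h = GVar \<and> Svar h = {} \<and> (\<exists>q. \<sigma> h = p @ q)}"
  have "inj_on Svar {g \<in> G. mu g = GVar}" using circuit by (simp add: set_circuit_def)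
  then have "\<forall>a \<in> ?E. \<forall>b \<in> ?E. a = b" by (auto simp: inj_on_def)
  then show ?thesis
    unfolding empty_below_def using finite_G by (simp add: card_le_Suc0_iff_eq)
qed

lemma empty_below_children: "empty_below (p @ [False]) + empty_below (p @ [True]) \<le> empty_below p"
  unfolding empty_below_def
  by (subst card_Un_disjoint[symmetric]) (auto simp: finite_G intro!: card_mono)

lemma empty_below_wire: "(c, g) \<in> W \<Longrightarrow> empty_below (\<sigma> c) \<le> empty_below (\<sigma> g)"
proof -
  assume "(c, g) \<in> W"
  then obtain q where "\<sigma> c = \<sigma> g @ q" using wire_sigma by (metis append_Nil2)
  then show ?thesis
    unfolding empty_below_def using finite_G by (intro card_mono) auto
qed

lemma captures_finite: "cap g X \<Longrightarrow> finite X"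
  by (induction rule: captures.induct) (use circuit in \<open>auto simp: set_circuit_def\<close>)

lemma captures_vtree_vars: "cap g X \<Longrightarrow> X \<subseteq> vtree_vars T (\<sigma> g)"
proof (induction rule: captures.induct)
  case (cap_var g)
  then show ?case using structured by (force simp: structuring_def vtree_vars_def)
next
  case (cap_times g g1 g2 S1 S2)
  then show ?case using vtree_vars_wire in_inputs by blast
next
  case (cap_union g g' S)
  then show ?case using vtree_vars_wire in_inputs by blast
qed simp

lemma captures_card_pos: "cap g X \<Longrightarrow> mu g \<noteq> GTop \<Longrightarrow> 0 < card X + empty_below (\<sigma> g)"
proof (induction rule: captures.induct)
  case (cap_var g)
  then have "Svar g = {} \<Longrightarrow> 0 < empty_below (\<sigma> g)"
    unfolding empty_below_def by (subst card_gt_0_iff) (auto simp: finite_G)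
  moreover have "finite (Svar g)" using cap_var circuit by (simp add: set_circuit_def)
  ultimately show ?case by (cases "Svar g = {}") auto
next
  case (cap_times g g1 g2 S1 S2)
  have "(g1, g) \<in> W" using cap_times.hyps(3) in_inputs by blast
  then have "0 < card S1 + empty_below (\<sigma> g)"
    using cap_times.IH(1) input_not_constant empty_below_wire by fastforce
  moreover have "card S1 \<le> card (S1 \<union> S2)"
    using cap_times.hyps(5,6) captures_finite by (intro card_mono) auto
  ultimately show ?case by linarith
next
  case (cap_union g g' S)
  have "(g', g) \<in> W" using cap_union.hyps(3) in_inputs by blast
  then show ?case using cap_union.IH input_not_constant empty_below_wire by fastforce
qed simp


lemma set_outputs_trace: "trace g tr \<Longrightarrow> set (outputs tr) = captured_sets G W mu Svar g"
proof (induction rule: enum_trace.induct)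
  case (tr_var g)
  then show ?case by (simp add: outputs_append captured_sets_def captures_var_iff)
next
  case (tr_times g gL gR tL tR)
  have distinct: "gL \<noteq> gR" using tr_times.hyps(4,6) by auto
  then have "inputs W g = {gL, gR}" using times_inputs tr_times.hyps(1,2,3,5) by blast
  then have "cap g X \<longleftrightarrow> (\<exists>S T. X = S \<union> T \<and> cap gL S \<and> cap gR T)" for X
    by (rule captures_times_iff[OF tr_times.hyps(1,2) _ distinct])
  then have "captured_sets G W mu Svar g =
      {S \<union> T | S T. S \<in> captured_sets G W mu Svar gL \<and> T \<in> captured_sets G W mu Svar gR}"
    unfolding captured_sets_def by auto
  moreover have "set (outputs (Tick # prod_trace tL tR)) =
      {S \<union> T | S T. S \<in> set (outputs tL) \<and> T \<in> set (outputs tR)}"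
    by (auto simp: outputs_prod_trace)
  ultimately show ?case using tr_times.IH by simp
next
  case (tr_union g ts)
  have "set (outputs (Tick # concat ts)) = (\<Union>i < length ts. set (outputs (ts ! i)))"
    by (simp add: outputs_concat UN_set_conv_nth)
  also have "\<dots> = (\<Union>c \<in> set (ins g). captured_sets G W mu Svar c)"
    using tr_union.hyps(3) tr_union.IH by (simp add: UN_set_conv_nth)
  also have "\<dots> = captured_sets G W mu Svar g"
    using tr_union.hyps(1,2) ins_inputs by (auto simp: captured_sets_def captures_union_iff)
  finally show ?case .
qed

lemma wf_W: "wf W"
  using finite_acyclic_wf finite_G wires_G acyclic_W finite_subset by blast

lemma trace_exists:
  assumes "g \<in> G" "mu g \<noteq> GTop" "mu g \<noteq> GBot"
  shows "\<exists>tr. trace g tr"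
  using assms
proof (induction g rule: wf_induct_rule[OF wf_W])
  case (1 g)
  note g = "1.prems"
  have input_trace: "\<exists>t. trace c t" if "(c, g) \<in> W" for c
  proof -
    have "c \<in> G" using that wires_G by blast
    then show ?thesis using "1.IH"[OF that] input_not_constant[OF that] by blast
  qed
  consider (var) "mu g = GVar" | (times) "mu g = GTimes" | (union) "mu g = GUnion"
    using g(2,3) by (cases "mu g") auto
  then show ?case
  proof cases
    case var
    with g(1) have "trace g (Tick # replicate (card (Svar g)) Tick @ [Out (Svar g)])"
      by (rule tr_var)
    then show ?thesis ..
  next
    case times
    then obtain gL gR where L: "gL \<in> inputs W g" "\<sigma> gL = \<sigma> g @ [False]"
      and R: "gR \<in> inputs W g" "\<sigma> gR = \<sigma> g @ [True]"
      using structured g(1) unfolding structuring_def by blast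
    obtain tL tR where "trace gL tL" "trace gR tR"
      using input_trace L(1) R(1) by (meson in_inputs)
    with g(1) times L R have "trace g (Tick # prod_trace tL tR)"
      by (rule tr_times[where \<sigma> = \<sigma>])
    then show ?thesis ..
  next
    case union
    have "\<exists>t. trace (ins g ! i) t" if "i < length (ins g)" for i
      using input_trace ins_inputs[OF g(1) union] in_inputs nth_mem[OF that] by blast
    then obtain ts where "length ts = length (ins g)" "\<forall>i < length ts. trace (ins g ! i) (ts ! i)"
      using Skolem_list_nth[where P = "\<lambda>i t. trace (ins g ! i) t"] by metis
    with g(1) union have "trace g (Tick # concat ts)" by (rule tr_union)
    then show ?thesis ..
  qed
qed

definition bounded_block :: "nat \<Rightarrow> 'g \<Rightarrow> nat \<times> 'v set \<Rightarrow> bool" where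
  "bounded_block h g b \<longleftrightarrow>
     cap g (snd b) \<and> fst b \<le> (2 * h + 2) * (card (snd b) + empty_below (\<sigma> g))"

lemma bounded_block_times:
  assumes g: "g \<in> G" "mu g = GTimes" and "0 < h"
    and L: "gL \<in> inputs W g" "\<sigma> gL = \<sigma> g @ [False]" "\<forall>b \<in> set bL. bounded_block (h - 1) gL b"
    and R: "gR \<in> inputs W g" "\<sigma> gR = \<sigma> g @ [True]" "\<forall>b \<in> set bR. bounded_block (h - 1) gR b"
    and b: "b \<in> set (add_first_gap 1 (prod_blocks bL bR))"
  shows "bounded_block h g b"
proof -
  obtain b' where b': "b' \<in> set (prod_blocks bL bR)" "snd b = snd b'" "fst b \<le> fst b' + 1"
    using b by (rule add_first_gap_memE)
  obtain k1 S1 k2 S2 where parts: "(k1, S1) \<in> set bL" "(k2, S2) \<in> set bR"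
    "snd b' = S1 \<union> S2" "fst b' \<le> k1 + k2 + card S1 + card S2"
    using b'(1) by (rule prod_blocks_memE)
  have h: "2 * (h - 1) + 2 = 2 * h" using \<open>0 < h\<close> by simp
  have left: "cap gL S1" "k1 \<le> 2 * h * (card S1 + empty_below (\<sigma> gL))"
    using L(3) parts(1) unfolding bounded_block_def h by auto
  have right: "cap gR S2" "k2 \<le> 2 * h * (card S2 + empty_below (\<sigma> gR))"
    using R(3) parts(2) unfolding bounded_block_def h by auto
  have "gL \<noteq> gR" using L(2) R(2) by auto
  then have "inputs W g = {gL, gR}" using times_inputs g L(1) R(1) by blast
  with g left(1) right(1) \<open>gL \<noteq> gR\<close> have cap: "cap g (S1 \<union> S2)" by (simp add: cap_times)
  have "vtree_vars T (\<sigma> gL) \<inter> vtree_vars T (\<sigma> gR) = {}"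
    using vtree_vars_children_disjoint[OF vtree, of "\<sigma> g"] L(2) R(2) by simp
  then have "S1 \<inter> S2 = {}"
    using captures_vtree_vars[OF left(1)] captures_vtree_vars[OF right(1)] by blast
  then have card: "card (S1 \<union> S2) = card S1 + card S2"
    using captures_finite left(1) right(1) by (simp add: card_Un_disjoint)
  have "empty_below (\<sigma> gL) + empty_below (\<sigma> gR) \<le> empty_below (\<sigma> g)"
    using empty_below_children L(2) R(2) by simp
  moreover have "0 < card S1 + card S2 + empty_below (\<sigma> g)"
    using captures_card_pos[OF cap] g(2) card by simp
  ultimately have "k1 + k2 + card S1 + card S2 + 1 \<le>
      (2 * h + 2) * (card S1 + card S2 + empty_below (\<sigma> g))"
    using left(2) right(2) by (intro gap_bound_step)
  then show ?thesis
    using cap card b'(2,3) parts(3,4) unfolding bounded_block_def by simp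
qed

lemma bounded_block_union:
  assumes g: "g \<in> G" "mu g = GUnion" and "0 < h" and c: "(c, g) \<in> W"
    and b': "bounded_block (h - 1) c b'" and b: "snd b = snd b'" "fst b \<le> fst b' + 1"
  shows "bounded_block h g b"
proof -
  have h: "2 * (h - 1) + 2 = 2 * h" using \<open>0 < h\<close> by simp
  have "c \<in> inputs W g" using c in_inputs by blast
  with g have cap: "cap g (snd b)"
    using b' b(1) unfolding bounded_block_def by (simp add: cap_union)
  have "fst b' \<le> 2 * h * (card (snd b) + empty_below (\<sigma> c))"
    using b' b(1) unfolding bounded_block_def h by simp
  moreover have "empty_below (\<sigma> c) + 0 \<le> empty_below (\<sigma> g)"
    using empty_below_wire[OF c] by simp
  moreover have "0 < card (snd b) + 0 + empty_below (\<sigma> g)"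
    using captures_card_pos[OF cap] g(2) by simp
  ultimately have "fst b' + 0 + card (snd b) + 0 + 1 \<le>
      (2 * h + 2) * (card (snd b) + 0 + empty_below (\<sigma> g))"
    by (intro gap_bound_step[where kR = 0 and b = 0 and eR = 0]) simp_all
  then show ?thesis using cap b(2) unfolding bounded_block_def by simp
qed

lemma var_trace_blocks:
  assumes "g \<in> G" "mu g = GVar"
  shows "\<exists>bs. Tick # replicate (card (Svar g)) Tick @ [Out (Svar g)] = blocks bs \<and> bs \<noteq> [] \<and>
    (\<forall>b \<in> set bs. bounded_block h g b)"
proof -
  let ?S = "Svar g"
  have cap: "cap g ?S" using captures_var_iff[OF assms] by simp
  have "0 + 0 + card ?S + 0 + 1 \<le> (2 * h + 2) * (card ?S + 0 + empty_below (\<sigma> g))"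
    using captures_card_pos[OF cap] assms(2)
    by (intro gap_bound_step[where eL = 0 and eR = 0]) simp_all
  then have "bounded_block h g (Suc (card ?S), ?S)" using cap by (simp add: bounded_block_def)
  moreover have "Tick # replicate (card ?S) Tick @ [Out ?S] = blocks [(Suc (card ?S), ?S)]"
    by simp
  ultimately show ?thesis by (intro exI[of _ "[(Suc (card ?S), ?S)]"]) simp
qed

lemma times_trace_blocks:
  assumes g: "g \<in> G" "mu g = GTimes" and "0 < h"
    and L: "gL \<in> inputs W g" "\<sigma> gL = \<sigma> g @ [False]"
      "tL = blocks bL" "bL \<noteq> []" "\<forall>b \<in> set bL. bounded_block (h - 1) gL b"
    and R: "gR \<in> inputs W g" "\<sigma> gR = \<sigma> g @ [True]"
      "tR = blocks bR" "bR \<noteq> []" "\<forall>b \<in> set bR. bounded_block (h - 1) gR b"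
  shows "\<exists>bs. Tick # prod_trace tL tR = blocks bs \<and> bs \<noteq> [] \<and> (\<forall>b \<in> set bs. bounded_block h g b)"
proof (intro exI conjI)
  show "Tick # prod_trace tL tR = blocks (add_first_gap 1 (prod_blocks bL bR))"
    using L(3,4) R(3,4) by (simp add: prod_trace_blocks Tick_blocks prod_blocks_Nil_iff)
  show "add_first_gap 1 (prod_blocks bL bR) \<noteq> []"
    using L(4) R(4) by (simp add: prod_blocks_Nil_iff)
  show "\<forall>b \<in> set (add_first_gap 1 (prod_blocks bL bR)). bounded_block h g b"
    using bounded_block_times[OF g \<open>0 < h\<close> L(1,2,5) R(1,2,5)] by blast
qed

lemma union_trace_blocks:
  assumes g: "g \<in> G" "mu g = GUnion" and "0 < h" and "ts \<noteq> []"
    and wire: "\<And>i. i < length ts \<Longrightarrow> (ins g ! i, g) \<in> W"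
    and ts: "\<forall>i < length ts. \<exists>bs. ts ! i = blocks bs \<and> bs \<noteq> [] \<and>
      (\<forall>b \<in> set bs. bounded_block (h - 1) (ins g ! i) b)"
  shows "\<exists>bs. Tick # concat ts = blocks bs \<and> bs \<noteq> [] \<and> (\<forall>b \<in> set bs. bounded_block h g b)"
proof -
  obtain bss where bss: "length bss = length ts"
    "\<forall>i < length ts. ts ! i = blocks (bss ! i) \<and> bss ! i \<noteq> [] \<and>
       (\<forall>b \<in> set (bss ! i). bounded_block (h - 1) (ins g ! i) b)"
    using ts unfolding Skolem_list_nth by blast
  have "ts = map blocks bss" by (rule nth_equalityI) (use bss in simp_all)
  then have concat: "concat ts = blocks (concat bss)" by (simp add: blocks_concat)
  have "bss ! 0 \<in> set bss" "bss ! 0 \<noteq> []" using bss \<open>ts \<noteq> []\<close> by simp_all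
  then have nonempty: "concat bss \<noteq> []" by auto
  show ?thesis
  proof (intro exI conjI)
    show "Tick # concat ts = blocks (add_first_gap 1 (concat bss))"
      using concat nonempty by (simp add: Tick_blocks)
    show "add_first_gap 1 (concat bss) \<noteq> []" using nonempty by simp
    show "\<forall>b \<in> set (add_first_gap 1 (concat bss)). bounded_block h g b"
    proof
      fix b assume "b \<in> set (add_first_gap 1 (concat bss))"
      then obtain b' where b': "b' \<in> set (concat bss)" "snd b = snd b'" "fst b \<le> fst b' + 1"
        by (rule add_first_gap_memE)
      then obtain bs where "bs \<in> set bss" "b' \<in> set bs" by auto
      then obtain i where i: "i < length ts" "b' \<in> set (bss ! i)"
        using bss(1) by (metis in_set_conv_nth)
      then have "bounded_block (h - 1) (ins g ! i) b'" using bss(2) by blast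
      then show "bounded_block h g b"
        using bounded_block_union[OF g \<open>0 < h\<close> wire[OF i(1)] _ b'(2,3)] by simp
    qed
  qed
qed

lemma trace_blocks:
  assumes "trace g tr" and "height_le W g h"
  shows "\<exists>bs. tr = blocks bs \<and> bs \<noteq> [] \<and> (\<forall>b \<in> set bs. bounded_block h g b)"
  using assms
proof (induction arbitrary: h rule: enum_trace.induct)
  case (tr_var g)
  show ?case using tr_var.hyps by (rule var_trace_blocks)
next
  case (tr_times g gL gR tL tR)
  have wires: "(gL, g) \<in> W" "(gR, g) \<in> W" using tr_times.hyps(3,5) by (simp_all add: in_inputs)
  note height = height_le_wire[OF tr_times.prems wires(1)] height_le_wire[OF tr_times.prems wires(2)]
  obtain bL where bL: "tL = blocks bL" "bL \<noteq> []" "\<forall>b \<in> set bL. bounded_block (h - 1) gL b"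
    using tr_times.IH(1)[OF height(2)] by blast
  obtain bR where bR: "tR = blocks bR" "bR \<noteq> []" "\<forall>b \<in> set bR. bounded_block (h - 1) gR b"
    using tr_times.IH(2)[OF height(4)] by blast
  show ?case
    using times_trace_blocks[OF tr_times.hyps(1,2) height(1) tr_times.hyps(3,4) bL
        tr_times.hyps(5,6) bR] .
next
  case (tr_union g ts)
  have wire: "(ins g ! i, g) \<in> W" if "i < length ts" for i
    using ins_inputs[OF tr_union.hyps(1,2)] tr_union.hyps(3) that in_inputs nth_mem by metis
  have "inputs W g \<noteq> {}" using circuit tr_union.hyps(1,2) unfolding set_circuit_def by blast
  then have "ts \<noteq> []" using ins_inputs[OF tr_union.hyps(1,2)] tr_union.hyps(3) by auto
  then have "0 < h" using height_le_wire(1)[OF tr_union.prems wire[of 0]] by simp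
  have "\<forall>i < length ts. \<exists>bs. ts ! i = blocks bs \<and> bs \<noteq> [] \<and>
      (\<forall>b \<in> set bs. bounded_block (h - 1) (ins g ! i) b)"
    using tr_union.IH height_le_wire(2)[OF tr_union.prems wire] by blast
  then show ?case
    using union_trace_blocks[OF tr_union.hyps(1,2) \<open>0 < h\<close> \<open>ts \<noteq> []\<close> wire] by blast
qed

lemma trace_gaps_le:
  assumes "trace g tr" and "W \<noteq> {}" and "i < length (gaps tr)"
  shows "gaps tr ! i \<le> 4 * depth W * (adjacent_size (outputs tr) i + 1)"
proof -
  have "0 < depth W" using depth_pos[OF finite_G wires_G acyclic_W] assms(2) by auto
  obtain bs where bs: "tr = blocks bs" "\<forall>b \<in> set bs. bounded_block (depth W) g b"
    using trace_blocks[OF assms(1) height_le_depth[OF finite_G wires_G acyclic_W]] by blast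
  show ?thesis
  proof (cases "i < length bs")
    case True
    have "fst (bs ! i) \<le> (2 * depth W + 2) * (card (snd (bs ! i)) + empty_below (\<sigma> g))"
      using bs(2) True unfolding bounded_block_def by simp
    also have "\<dots> \<le> 4 * depth W * (adjacent_size (outputs tr) i + 1)"
    proof (rule mult_mono)
      have "card (snd (bs ! i)) \<le> adjacent_size (outputs tr) i"
        using True by (simp add: bs(1) outputs_blocks adjacent_size_def)
      then show "card (snd (bs ! i)) + empty_below (\<sigma> g) \<le> adjacent_size (outputs tr) i + 1"
        using empty_below_le_1[of "\<sigma> g"] by linarith
    qed (use \<open>0 < depth W\<close> in simp_all)
    finally show ?thesis using True by (simp add: bs(1) gaps_blocks nth_append)
  next
    case False
    then show ?thesis using assms(3) by (simp add: bs(1) gaps_blocks nth_append)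
  qed
qed

end

theorem proposition4p2:
  "\<exists>c :: nat. \<forall>G W mu (Svar :: 'g \<Rightarrow> 'v set) T \<sigma> (ins :: 'g \<Rightarrow> 'g list) g.
     complete_structured_DNNF G W mu Svar T \<sigma> \<longrightarrow>
     (\<forall>h \<in> G. mu h = GUnion \<longrightarrow> set (ins h) = inputs W h \<and> distinct (ins h)) \<longrightarrow>
     g \<in> G \<longrightarrow> mu g = GUnion \<longrightarrow>
     (\<exists>tr. enum_trace G W mu Svar \<sigma> ins g tr) \<and>
     (\<forall>tr. enum_trace G W mu Svar \<sigma> ins g tr \<longrightarrow>
        set (outputs tr) = captured_sets G W mu Svar g \<and>
        (\<forall>i < length (gaps tr).
           gaps tr ! i \<le> c * depth W * (adjacent_size (outputs tr) i + 1)))"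
proof (intro exI[of _ 4] allI impI)
  fix G W mu T \<sigma> g and Svar :: "'g \<Rightarrow> 'v set" and ins :: "'g \<Rightarrow> 'g list"
  assume DNNF: "complete_structured_DNNF G W mu Svar T \<sigma>"
    and ins: "\<forall>h \<in> G. mu h = GUnion \<longrightarrow> set (ins h) = inputs W h \<and> distinct (ins h)"
    and g: "g \<in> G" "mu g = GUnion"
  interpret DNNF_enumeration G W mu Svar T \<sigma> ins
    using DNNF ins by unfold_locales blast+
  have "inputs W g \<noteq> {}" using circuit g unfolding set_circuit_def by blast
  then have "W \<noteq> {}" by (auto simp: inputs_def)
  show "(\<exists>tr. trace g tr) \<and>
      (\<forall>tr. trace g tr \<longrightarrow> set (outputs tr) = captured_sets G W mu Svar g \<and>
        (\<forall>i < length (gaps tr). gaps tr ! i \<le> 4 * depth W * (adjacent_size (outputs tr) i + 1)))"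
    using trace_exists[OF g(1)] g(2) set_outputs_trace trace_gaps_le[OF _ \<open>W \<noteq> {}\<close>] by simp
qed

end
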